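(* Let $p>1$ and $r,s\in(0,1)$. Then (1) $\arcsin_p(rs)\le\sqrt{\arcsin_p(r^2)\arcsin_p(s^2)}\le\arcsin_p(r)\arcsin_p(s)$; (2) $\operatorname{artanh}_p(rs)\le\sqrt{\operatorname{artanh}_p(r^2)\operatorname{artanh}_p(s^2)}\le\operatorname{artanh}_p(r)\operatorname{artanh}_p(s)$; (3) $\operatorname{arsinh}_p(r)\operatorname{arsinh}_p(s)\le\sqrt{\operatorname{arsinh}_p(r^2)\operatorname{arsinh}_p(s^2)}\le\operatorname{arsinh}_p(rs)$; (4) $\arctan_p(r)\arctan_p(s)\le\sqrt{\arctan_p(r^2)\arctan_p(s^2)}\le\arctan_p(rs)$.
   Context: For $p>1$ and $y\in(0,1)$: $\arcsin_p y=\int_0^y(1-t^p)^{-1/p}dt$, $\arctan_p y=\int_0^y(1+t^p)^{-1}dt$, $\operatorname{arsinh}_p y=\int_0^y(1+t^p)^{-1/p}dt$, $\operatorname{artanh}_p y=\int_0^y(1-t^p)^{-1}dt$. *)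

theory Defs
  imports "HOL-Analysis.Analysis"
begin

definition arcsin_p :: "real \<Rightarrow> real \<Rightarrow> real" where
  "arcsin_p p y = integral {0..y} (\<lambda>t. (1 - t powr p) powr (-1/p))"

definition arctan_p :: "real \<Rightarrow> real \<Rightarrow> real" where
  "arctan_p p y = integral {0..y} (\<lambda>t. 1 / (1 + t powr p))"

definition arsinh_p :: "real \<Rightarrow> real \<Rightarrow> real" where
  "arsinh_p p y = integral {0..y} (\<lambda>t. (1 + t powr p) powr (-1/p))"

definition artanh_p :: "real \<Rightarrow> real \<Rightarrow> real" where
  "artanh_p p y = integral {0..y} (\<lambda>t. 1 / (1 - t powr p))"

end

theory Submission
  imports Defs
begin

text \<open>Write \<open>F(x) = \<integral>\<^sub>0\<^sup>x f = x A(x)\<close>, where \<open>A(x) = \<integral>\<^sub>0\<^sup>1 f(xt) dt\<close> is the mean of \<open>f\<close>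
  on \<open>[0,x]\<close>. The function \<open>u \<mapsto> ln F(e\<^sup>u)\<close> has derivative \<open>f(e\<^sup>u) / A(e\<^sup>u)\<close>. If
  \<open>f(xt) / f(x)\<close> decreases in \<open>x\<close>, as it does for the integrands \<open>(1 - t\<^sup>p)\<^sup>-\<^sup>a\<close> of
  \<open>arcsin\<^sub>p\<close> and \<open>artanh\<^sub>p\<close>, then so does \<open>A(x) / f(x)\<close>; hence \<open>ln F(e\<^sup>u)\<close> is convex, and
  its midpoint inequality at \<open>ln r\<^sup>2, ln s\<^sup>2\<close> reads \<open>F(rs)\<^sup>2 \<le> F(r\<^sup>2) F(s\<^sup>2)\<close>. Such an
  \<open>f\<close> is also increasing with \<open>f(0) = 1\<close>, so \<open>A\<close> is increasing and \<open>A \<ge> 1\<close>, which gives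
  \<open>F(r\<^sup>2) = r\<^sup>2 A(r\<^sup>2) \<le> r\<^sup>2 A(r)\<^sup>2 = F(r)\<^sup>2\<close>. For the integrands \<open>(1 + t\<^sup>p)\<^sup>-\<^sup>a\<close> of
  \<open>arsinh\<^sub>p\<close> and \<open>arctan\<^sub>p\<close> every inequality is reversed; both cases are treated at once by
  multiplying all inequalities with a sign \<open>c = \<plusminus>1\<close>.\<close>

lemma mult_unit_interval:
  fixes x t :: real
  shows "0 \<le> x \<Longrightarrow> x < 1 \<Longrightarrow> 0 \<le> t \<Longrightarrow> t \<le> 1 \<Longrightarrow> 0 \<le> x * t \<and> x * t < 1"
  using mult_left_le[of t x] by auto

lemma sign_ln_le_iff:
  fixes a b c :: real
  assumes "c = 1 \<or> c = -1" "0 < a" "0 < b"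
  shows "c * ln a \<le> c * ln b \<longleftrightarrow> c * a \<le> c * b"
  using assms by auto

lemma sign_sqrt_mult_le:
  fixes a b x y c :: real
  assumes c: "c = 1 \<or> c = -1" and "0 \<le> a" "0 \<le> b" "0 \<le> x" "0 \<le> y"
    and "c * a \<le> c * x\<^sup>2" "c * b \<le> c * y\<^sup>2"
  shows "c * sqrt (a * b) \<le> c * (x * y)"
  using c
proof
  assume "c = 1"
  with assms have "a * b \<le> (x * y)\<^sup>2"
    unfolding power_mult_distrib by (intro mult_mono) auto
  then show ?thesis
    using assms \<open>c = 1\<close> by (simp add: real_le_lsqrt)
next
  assume "c = -1"
  with assms have "(x * y)\<^sup>2 \<le> a * b"
    unfolding power_mult_distrib by (intro mult_mono) auto
  then show ?thesis
    using \<open>c = -1\<close> by (simp add: real_le_rsqrt)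
qed

lemma sign_powr_neg_le:
  fixes a c u v :: real
  assumes c: "c = 1 \<or> c = -1" and "0 < u" "0 < v" "0 \<le> a" "c * v \<le> c * u"
  shows "c * u powr (- a) \<le> c * v powr (- a)"
  using c assms powr_mono2'[of "- a" v u] powr_mono2'[of "- a" u v] by auto

locale pos_integrand =
  fixes f :: "real \<Rightarrow> real"
  assumes continuous: "continuous_on {0..<1} f"
    and pos: "\<And>t. 0 \<le> t \<Longrightarrow> t < 1 \<Longrightarrow> 0 < f t"
begin

definition prim :: "real \<Rightarrow> real" where
  "prim x = integral {0..x} f"

definition avg :: "real \<Rightarrow> real" where
  "avg x = integral {0..1} (\<lambda>t. f (x * t))"

lemma continuous_on_scaled:
  assumes "0 \<le> x" "x < 1"
  shows "continuous_on {0..1} (\<lambda>t. f (x * t))"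
  by (rule continuous_on_compose2[OF continuous])
    (use assms mult_unit_interval in \<open>auto intro!: continuous_intros\<close>)

lemma integrable_scaled:
  "0 \<le> x \<Longrightarrow> x < 1 \<Longrightarrow> (\<lambda>t. f (x * t)) integrable_on {0..1}"
  using continuous_on_scaled integrable_continuous_real by blast

lemma avg_pos:
  assumes "0 \<le> x" "x < 1"
  shows "0 < avg x"
proof -
  obtain t\<^sub>0 where t\<^sub>0: "t\<^sub>0 \<in> {0..1}" and min: "\<And>t. t \<in> {0..1} \<Longrightarrow> f (x * t\<^sub>0) \<le> f (x * t)"
    using continuous_attains_inf[OF compact_Icc _ continuous_on_scaled[OF assms]] by auto
  have "integral {0..1} (\<lambda>_::real. f (x * t\<^sub>0)) \<le> avg x"
    unfolding avg_def by (rule integral_le) (use integrable_scaled[OF assms] min in auto)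
  moreover have "0 < f (x * t\<^sub>0)"
    using pos mult_unit_interval assms t\<^sub>0 by auto
  ultimately show ?thesis
    by simp
qed

lemma mult_avg_le_mult_avg:
  assumes "0 \<le> x" "x < 1" "0 \<le> y" "y < 1"
    and "\<And>t. 0 \<le> t \<Longrightarrow> t \<le> 1 \<Longrightarrow> a * f (x * t) \<le> b * f (y * t)"
  shows "a * avg x \<le> b * avg y"
proof -
  have "a * avg x = integral {0..1} (\<lambda>t. a * f (x * t))"
    unfolding avg_def using integrable_scaled assms by simp
  also have "\<dots> \<le> integral {0..1} (\<lambda>t. b * f (y * t))"
    by (rule integral_le) (use integrable_cmul[OF integrable_scaled] assms in auto)
  also have "\<dots> = b * avg y"
    unfolding avg_def using integrable_scaled assms by simp
  finally show ?thesis .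
qed

lemma prim_eq_mult_avg:
  assumes "0 < x" "x < 1"
  shows "prim x = x * avg x"
proof -
  have "(\<lambda>t. t / x) ` {0..x} = {0..1}"
    using assms by (auto simp: image_iff field_simps intro!: bexI[where x="_ * x"])
  with integral_stretch_real[of x 0 x f] assms show ?thesis
    by (simp add: prim_def avg_def)
qed

lemma prim_pos: "0 < x \<Longrightarrow> x < 1 \<Longrightarrow> 0 < prim x"
  by (simp add: prim_eq_mult_avg avg_pos)

lemma has_real_derivative_prim:
  assumes "0 < x" "x < 1"
  shows "(prim has_real_derivative f x) (at x)"
proof -
  define b where "b = (x + 1) / 2"
  have b: "x < b" "b < 1"
    using assms by (auto simp: b_def)
  have "continuous_on {0..b} f"
    by (rule continuous_on_subset[OF continuous]) (use b in auto)
  then have "(prim has_real_derivative f x) (at x within {0..b})"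
    unfolding prim_def using integral_has_real_derivative assms b by auto
  then have "(prim has_real_derivative f x) (at x within {0<..<b})"
    by (rule has_field_derivative_subset) auto
  then show ?thesis
    using at_within_open[of x "{0<..<b}"] assms b by auto
qed

lemma has_real_derivative_ln_prim_exp:
  assumes "u < 0"
  shows "((\<lambda>u. ln (prim (exp u))) has_real_derivative f (exp u) / avg (exp u)) (at u)"
proof -
  have e: "0 < exp u" "exp u < 1"
    using assms by auto
  have "((\<lambda>u. ln (prim (exp u))) has_real_derivative 1 / prim (exp u) * (f (exp u) * exp u)) (at u)"
    by (rule DERIV_chain2[OF DERIV_ln_divide[OF prim_pos[OF e]]
          DERIV_chain2[OF has_real_derivative_prim[OF e] DERIV_exp]])
  also have "1 / prim (exp u) * (f (exp u) * exp u) = f (exp u) / avg (exp u)"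
    using prim_eq_mult_avg[OF e] by simp
  finally show ?thesis .
qed

lemma convex_on_scaled_ln_prim_exp:
  assumes "\<And>x y. 0 < x \<Longrightarrow> x \<le> y \<Longrightarrow> y < 1 \<Longrightarrow> c * (f x / avg x) \<le> c * (f y / avg y)"
  shows "convex_on {..<0} (\<lambda>u. c * ln (prim (exp u)))"
proof (rule convex_on_realI[where f' = "\<lambda>u. c * (f (exp u) / avg (exp u))"])
  show "connected {..<0::real}"
    by simp
next
  fix u :: real
  assume "u \<in> {..<0}"
  then show "((\<lambda>u. c * ln (prim (exp u))) has_real_derivative c * (f (exp u) / avg (exp u))) (at u)"
    by (intro DERIV_cmult has_real_derivative_ln_prim_exp) simp
next
  fix u v :: real
  assume "u \<in> {..<0}" "v \<in> {..<0}" "u \<le> v"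
  then show "c * (f (exp u) / avg (exp u)) \<le> c * (f (exp v) / avg (exp v))"
    by (intro assms) auto
qed

lemma scaled_ln_prim_mult_le:
  assumes "\<And>x y. 0 < x \<Longrightarrow> x \<le> y \<Longrightarrow> y < 1 \<Longrightarrow> c * (f x / avg x) \<le> c * (f y / avg y)"
    and r: "0 < r" "r < 1" and s: "0 < s" "s < 1"
  shows "c * ln (prim (r * s)) \<le> c * ln (sqrt (prim (r\<^sup>2) * prim (s\<^sup>2)))"
proof -
  have neg: "ln (r\<^sup>2) < 0" "ln (s\<^sup>2) < 0"
    using r s by (simp_all add: power_less_one_iff)
  have "(1 - 1/2) *\<^sub>R ln (r\<^sup>2) + (1/2) *\<^sub>R ln (s\<^sup>2) = ln (r * s)"
    using r s by (simp add: ln_mult ln_realpow)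
  then have "c * ln (prim (r * s))
      \<le> (1 - 1/2) * (c * ln (prim (r\<^sup>2))) + (1/2) * (c * ln (prim (s\<^sup>2)))"
    using convex_onD[OF convex_on_scaled_ln_prim_exp[OF assms(1)], of "1/2" "ln (r\<^sup>2)" "ln (s\<^sup>2)"]
      neg r s by simp
  also have "\<dots> = c * ln (sqrt (prim (r\<^sup>2) * prim (s\<^sup>2)))"
    using r s prim_pos[of "r\<^sup>2"] prim_pos[of "s\<^sup>2"]
    by (simp add: ln_sqrt ln_mult power_less_one_iff algebra_simps)
  finally show ?thesis .
qed

end

locale ratio_monotone_integrand = pos_integrand +
  fixes c :: real
  assumes sign: "c = 1 \<or> c = -1"
    and at_zero: "f 0 = 1"
    and ratio_mono: "\<And>x y t. 0 \<le> x \<Longrightarrow> x \<le> y \<Longrightarrow> y < 1 \<Longrightarrow> 0 \<le> t \<Longrightarrow> t \<le> 1 \<Longrightarrow>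
      c * (f x * f (y * t)) \<le> c * (f y * f (x * t))"
begin

lemma scaled_mono: "0 \<le> x \<Longrightarrow> x \<le> y \<Longrightarrow> y < 1 \<Longrightarrow> c * f x \<le> c * f y"
  using ratio_mono[of x y 0] by (simp add: at_zero)

lemma scaled_avg_mono:
  assumes "0 \<le> x" "x \<le> y" "y < 1"
  shows "c * avg x \<le> c * avg y"
proof (rule mult_avg_le_mult_avg)
  fix t :: real
  assume "0 \<le> t" "t \<le> 1"
  then show "c * f (x * t) \<le> c * f (y * t)"
    using assms mult_unit_interval[of y t] by (intro scaled_mono) (auto intro: mult_right_mono)
qed (use assms in auto)

lemma sign_le_scaled_avg: "0 \<le> x \<Longrightarrow> x < 1 \<Longrightarrow> c \<le> c * avg x"
  using scaled_avg_mono[of 0 x] by (simp add: avg_def at_zero)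

lemma scaled_ratio_avg_mono:
  assumes "0 < x" "x \<le> y" "y < 1"
  shows "c * (f x / avg x) \<le> c * (f y / avg y)"
proof -
  have "c * f x * avg y \<le> c * f y * avg x"
    by (rule mult_avg_le_mult_avg) (use assms ratio_mono in \<open>auto simp: mult.assoc\<close>)
  moreover have "0 < avg x" "0 < avg y"
    using assms avg_pos by auto
  ultimately show ?thesis
    by (simp add: field_simps)
qed

lemma prim_mult_le_sqrt:
  assumes "0 < r" "r < 1" "0 < s" "s < 1"
  shows "c * prim (r * s) \<le> c * sqrt (prim (r\<^sup>2) * prim (s\<^sup>2))"
proof -
  have "0 < prim (r * s)" "0 < prim (r\<^sup>2)" "0 < prim (s\<^sup>2)"
    using assms mult_strict_mono[of r 1 s 1] by (auto intro!: prim_pos simp: power_less_one_iff)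
  with sign scaled_ln_prim_mult_le[OF scaled_ratio_avg_mono assms] show ?thesis
    by (simp add: sign_ln_le_iff)
qed

lemma prim_square_le:
  assumes "0 < r" "r < 1"
  shows "c * prim (r\<^sup>2) \<le> c * (prim r)\<^sup>2"
proof -
  have r2: "0 < r\<^sup>2" "r\<^sup>2 \<le> r" "r\<^sup>2 < 1"
    using assms mult_left_le[of r r] mult_strict_mono[of r 1 r 1] by (auto simp: power2_eq_square)
  have avg_sq: "c * avg r \<le> c * (avg r)\<^sup>2"
    using mult_left_mono[OF sign_le_scaled_avg[of r], of "avg r"] avg_pos[of r] assms
    by (simp add: power2_eq_square algebra_simps)
  have "c * prim (r\<^sup>2) = r\<^sup>2 * (c * avg (r\<^sup>2))"
    using prim_eq_mult_avg r2 by simp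
  also have "\<dots> \<le> r\<^sup>2 * (c * avg r)"
    using scaled_avg_mono r2 assms by (simp add: mult_left_mono)
  also have "\<dots> \<le> r\<^sup>2 * (c * (avg r)\<^sup>2)"
    using avg_sq by (simp add: mult_left_mono)
  also have "\<dots> = c * (prim r)\<^sup>2"
    using prim_eq_mult_avg assms by (simp add: power_mult_distrib)
  finally show ?thesis .
qed

lemma sqrt_le_mult_prim:
  assumes "0 < r" "r < 1" "0 < s" "s < 1"
  shows "c * sqrt (prim (r\<^sup>2) * prim (s\<^sup>2)) \<le> c * (prim r * prim s)"
  using assms by (intro sign_sqrt_mult_le[OF sign] prim_square_le order.strict_implies_order prim_pos)
    (auto simp: power_less_one_iff)

end

definition power_kernel :: "real \<Rightarrow> real \<Rightarrow> real \<Rightarrow> real \<Rightarrow> real" where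
  "power_kernel c a p t = (1 - c * t powr p) powr (- a)"

lemma sign_mult_less_one:
  fixes c x :: real
  shows "c = 1 \<or> c = -1 \<Longrightarrow> 0 \<le> x \<Longrightarrow> x < 1 \<Longrightarrow> c * x < 1"
  by auto

lemma powr_in_unit_interval:
  fixes p t :: real
  shows "0 < p \<Longrightarrow> 0 \<le> t \<Longrightarrow> t < 1 \<Longrightarrow> 0 \<le> t powr p \<and> t powr p < 1"
  using powr_less_mono2[of p t 1] by auto

lemma power_kernel_ratio_mono:
  assumes c: "c = 1 \<or> c = -1" and "0 < p" "0 \<le> a"
    and xy: "0 \<le> x" "x \<le> y" "y < 1" and t: "0 \<le> t" "t \<le> 1"
  shows "c * (power_kernel c a p x * power_kernel c a p (y * t))
    \<le> c * (power_kernel c a p y * power_kernel c a p (x * t))"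
proof -
  define X Y T where "X = x powr p" and "Y = y powr p" and "T = t powr p"
  have XYT: "0 \<le> X" "X \<le> Y" "Y < 1" "0 \<le> T" "T \<le> 1"
    using powr_mono2[of p x y] powr_in_unit_interval[of p y] powr_le1[of p t] assms
    by (auto simp: X_def Y_def T_def)
  then have pos: "c * X < 1" "c * Y < 1" "c * (X * T) < 1" "c * (Y * T) < 1"
    using mult_unit_interval[of X T] mult_unit_interval[of Y T]
    by (auto intro!: sign_mult_less_one[OF c])
  have "c * ((1 - c * Y) * (1 - c * (X * T))) \<le> c * ((1 - c * X) * (1 - c * (Y * T)))"
    using c XYT mult_nonneg_nonneg[of "Y - X" "1 - T"] by (auto simp: algebra_simps)
  then have "c * ((1 - c * X) * (1 - c * (Y * T))) powr (- a)
      \<le> c * ((1 - c * Y) * (1 - c * (X * T))) powr (- a)"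
    using pos by (intro sign_powr_neg_le[OF c]) (simp_all add: \<open>0 \<le> a\<close>)
  then show ?thesis
    using pos xy t by (simp add: power_kernel_def powr_mult X_def Y_def T_def)
qed

lemma ratio_monotone_integrand_power_kernel:
  assumes c: "c = 1 \<or> c = -1" and "0 < p" "0 \<le> a"
  shows "ratio_monotone_integrand (power_kernel c a p) c"
proof unfold_locales
  have base_pos: "c * t powr p < 1" if "0 \<le> t" "t < 1" for t
    using sign_mult_less_one[OF c] powr_in_unit_interval[OF \<open>0 < p\<close> that] by blast
  show "continuous_on {0..<1} (power_kernel c a p)"
    unfolding power_kernel_def using base_pos \<open>0 < p\<close>
    by (intro continuous_on_powr' continuous_intros) (fastforce dest: base_pos)+
  show "0 < power_kernel c a p t" if "0 \<le> t" "t < 1" for t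
    using base_pos[OF that] by (simp add: power_kernel_def)
  show "power_kernel c a p 0 = 1"
    using \<open>0 < p\<close> by (simp add: power_kernel_def)
qed (use c assms power_kernel_ratio_mono in auto)

lemma power_kernel_geometric_mean_inequalities:
  fixes c a p r s :: real
  defines "K y \<equiv> integral {0..y} (power_kernel c a p)"
  assumes "c = 1 \<or> c = -1" "0 < p" "0 \<le> a" "0 < r" "r < 1" "0 < s" "s < 1"
  shows "c * K (r * s) \<le> c * sqrt (K (r\<^sup>2) * K (s\<^sup>2))"
    and "c * sqrt (K (r\<^sup>2) * K (s\<^sup>2)) \<le> c * (K r * K s)"
proof -
  interpret ratio_monotone_integrand "power_kernel c a p" c
    using assms by (intro ratio_monotone_integrand_power_kernel)
  show "c * K (r * s) \<le> c * sqrt (K (r\<^sup>2) * K (s\<^sup>2))"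
    using prim_mult_le_sqrt assms by (simp add: K_def prim_def)
  show "c * sqrt (K (r\<^sup>2) * K (s\<^sup>2)) \<le> c * (K r * K s)"
    using sqrt_le_mult_prim assms by (simp add: K_def prim_def)
qed

lemma arcsin_p_eq_power_kernel: "arcsin_p p y = integral {0..y} (power_kernel 1 (1/p) p)"
  by (simp add: arcsin_p_def power_kernel_def[abs_def])

lemma arsinh_p_eq_power_kernel: "arsinh_p p y = integral {0..y} (power_kernel (-1) (1/p) p)"
  by (simp add: arsinh_p_def power_kernel_def[abs_def])

lemma arctan_p_eq_power_kernel: "arctan_p p y = integral {0..y} (power_kernel (-1) 1 p)"
  by (simp add: arctan_p_def power_kernel_def[abs_def] powr_minus divide_inverse)

lemma artanh_p_eq_power_kernel:
  assumes "0 < p" "y < 1"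
  shows "artanh_p p y = integral {0..y} (power_kernel 1 1 p)"
  unfolding artanh_p_def
proof (rule integral_cong)
  fix t
  assume "t \<in> {0..y}"
  then have "t powr p < 1"
    using assms powr_in_unit_interval[of p t] by auto
  then show "1 / (1 - t powr p) = power_kernel 1 1 p t"
    by (simp add: power_kernel_def powr_minus divide_inverse)
qed

theorem theorem2p5:
  fixes p r s :: real
  assumes "p > 1" and "0 < r" and "r < 1" and "0 < s" and "s < 1"
  shows "(arcsin_p p (r * s) \<le> sqrt (arcsin_p p (r^2) * arcsin_p p (s^2))
         \<and> sqrt (arcsin_p p (r^2) * arcsin_p p (s^2)) \<le> arcsin_p p r * arcsin_p p s)
         \<and> (artanh_p p (r * s) \<le> sqrt (artanh_p p (r^2) * artanh_p p (s^2))
         \<and> sqrt (artanh_p p (r^2) * artanh_p p (s^2)) \<le> artanh_p p r * artanh_p p s)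
         \<and> (arsinh_p p r * arsinh_p p s \<le> sqrt (arsinh_p p (r^2) * arsinh_p p (s^2))
         \<and> sqrt (arsinh_p p (r^2) * arsinh_p p (s^2)) \<le> arsinh_p p (r * s))
         \<and> (arctan_p p r * arctan_p p s \<le> sqrt (arctan_p p (r^2) * arctan_p p (s^2))
         \<and> sqrt (arctan_p p (r^2) * arctan_p p (s^2)) \<le> arctan_p p (r * s))"
proof -
  have p: "0 < p" "0 \<le> 1 / p"
    using \<open>p > 1\<close> by auto
  have below_one: "r * s < 1" "r\<^sup>2 < 1" "s\<^sup>2 < 1"
    using assms mult_strict_mono[of r 1 s 1] by (auto simp: power_less_one_iff)
  note K = power_kernel_geometric_mean_inequalities[OF _ p(1) _ assms(2-5)]
  show ?thesis
    using K[of 1 "1/p"] K[of 1 1] K[of "-1" "1/p"] K[of "-1" 1] p below_one assms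
    by (simp add: arcsin_p_eq_power_kernel artanh_p_eq_power_kernel
        arsinh_p_eq_power_kernel arctan_p_eq_power_kernel)
qed

end
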